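(* Let $T(x_1,x_2,x_3)$ be a real multivariate polynomial, and suppose $p\mapsto T(p,\sqrt{p},\sqrt{1-p})$ is not the zero function on $[0,1]$. If $T(z,\sqrt{z},\sqrt{1-z})=0$ for some $z\in[0,1]$, then there exist $\delta>0$, a positive integer $k$, and a function $m(p)$ continuous on $[z-\delta,z+\delta]\cap[0,1]$ with $m(z)\neq0$, such that $T(p,\sqrt{p},\sqrt{1-p})=(p-z)^{k/2}m(p)$ for $p\in[z-\delta,z+\delta]\cap[0,1]$. *)

theory Defs
  imports "HOL-Analysis.Analysis"
begin

text \<open>A real polynomial in three variables, given by its coefficient function on
  exponent triples (assumed to have finite support), evaluated at a point.\<close>
definition eval_poly3 :: "(nat \<times> nat \<times> nat \<Rightarrow> real) \<Rightarrow> real \<Rightarrow> real \<Rightarrow> real \<Rightarrow> real" where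
  "eval_poly3 c x1 x2 x3 =
     (\<Sum>e\<in>{e. c e \<noteq> 0}. c e * x1 ^ fst e * x2 ^ fst (snd e) * x3 ^ snd (snd e))"

text \<open>The real "half power" x^(k/2): for even k the ordinary power x^(k div 2);
  for odd k (only meaningful on one side of the base point) |x| powr (k/2).\<close>
definition half_pow :: "real \<Rightarrow> nat \<Rightarrow> real" where
  "half_pow x k = (if even k then x ^ (k div 2) else \<bar>x\<bar> powr (real k / 2))"

end

(*
  Substituting p = sin^2 t with t = arcsin (sqrt p) in [0, pi/2] turns T(p, sqrt p, sqrt (1 - p))
  into T(sin^2 t, sin t, cos t), the restriction to the real line of an entire function.
  It is not identically zero, so near t_z = arcsin (sqrt z) it factors as (t - t_z)^n g(t) with
  g(t_z) /= 0. It remains to compare t - t_z with p - z: since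
  sin (t - t_z) sin (t + t_z) = sin^2 t - sin^2 t_z = p - z, the difference t - t_z is a
  continuous nonvanishing multiple of p - z when 0 < z < 1, of sqrt p when z = 0 and of
  sqrt (1 - p) when z = 1, giving k = 2n, n and n respectively.
*)
theory Submission
  imports Defs "HOL-Complex_Analysis.Conformal_Mappings"
begin

definition sinc :: "real \<Rightarrow> real" where
  "sinc x = (if x = 0 then 1 else sin x / x)"

lemma isCont_sinc: "isCont sinc x"
proof cases
  assume "x = 0"
  then show ?thesis
    using LIM_equal [where g = "\<lambda>x. sin x / x" and a = 0 and f = sinc and l = 1] DERIV_sin [of 0]
    by (auto simp: isCont_def sinc_def has_field_derivative_def field_has_derivative_at)
next
  assume "x \<noteq> 0"
  show ?thesis
    by (rule continuous_transform_within [where \<delta> = "\<bar>x\<bar>" and f = "\<lambda>x. sin x / x"])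
       (auto simp: dist_real_def \<open>x \<noteq> 0\<close> sinc_def)
qed

lemma continuous_on_sinc [continuous_intros]:
  "continuous_on S f \<Longrightarrow> continuous_on S (\<lambda>x. sinc (f x))"
  using continuous_on_compose2 [OF continuous_at_imp_continuous_on [of UNIV sinc]]
  by (auto simp: isCont_sinc)

lemma sin_eq_mult_sinc: "sin x = x * sinc x"
  by (simp add: sinc_def)

lemma sinc_nonzero: "\<bar>x\<bar> < pi \<Longrightarrow> sinc x \<noteq> 0"
  by (auto simp: sinc_def sin_zero_pi_iff)

lemma sin_diff_mult_sin_add:
  fixes x y :: real
  shows "sin (x - y) * sin (x + y) = sin x ^ 2 - sin y ^ 2"
proof -
  have "sin (x - y) * sin (x + y) = (sin x * cos y) ^ 2 - (cos x * sin y) ^ 2"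
    by (simp add: sin_diff sin_add power2_eq_square algebra_simps)
  also have "\<dots> = sin x ^ 2 - sin y ^ 2"
    by (simp add: power_mult_distrib cos_squared_eq algebra_simps)
  finally show ?thesis .
qed

lemma half_pow_nonneg:
  assumes "x \<ge> 0"
  shows "half_pow x k = sqrt x ^ k"
proof (cases "even k")
  case True
  then obtain j where "k = 2 * j" by blast
  then show ?thesis using assms by (simp add: half_pow_def power_mult)
next
  case False
  have "x powr (real k / 2) = (x powr (1 / 2)) powr real k"
    by (simp add: powr_powr)
  also have "\<dots> = sqrt x ^ k"
    using assms False by (cases "x = 0") (auto simp: powr_half_sqrt powr_realpow elim: oddE)
  finally have "x powr (real k / 2) = sqrt x ^ k" .
  then show ?thesis using assms False by (simp add: half_pow_def)
qed

lemma half_pow_nonpos: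
  assumes "x \<le> 0"
  shows "half_pow x k = (if even k then (-1) ^ (k div 2) else 1) * sqrt (-x) ^ k"
proof (cases "even k")
  case True
  then obtain j where "k = 2 * j" by blast
  then show ?thesis using assms by (simp add: half_pow_def power_mult power_minus')
next
  case False
  then have "half_pow x k = half_pow (-x) k" by (simp add: half_pow_def)
  then show ?thesis using assms False by (simp add: half_pow_nonneg)
qed

lemma half_pow_double: "half_pow x (2 * k) = x ^ k"
  by (simp add: half_pow_def)

lemma
  assumes "p \<in> {0..1}"
  shows sin_arcsin_sqrt: "sin (arcsin (sqrt p)) = sqrt p"
    and cos_arcsin_sqrt: "cos (arcsin (sqrt p)) = sqrt (1 - p)"
    and arcsin_sqrt_nonneg: "0 \<le> arcsin (sqrt p)"
    and arcsin_sqrt_le_pi_half: "arcsin (sqrt p) \<le> pi / 2"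
proof -
  have p: "-1 \<le> sqrt p" "0 \<le> sqrt p" "sqrt p \<le> 1"
    using assms by (auto intro: order_trans [of "-1" 0])
  show "sin (arcsin (sqrt p)) = sqrt p" using sin_arcsin p by blast
  show "cos (arcsin (sqrt p)) = sqrt (1 - p)" using cos_arcsin [OF p(1) p(3)] assms by simp
  show "0 \<le> arcsin (sqrt p)" using arcsin_le_arcsin [of 0 "sqrt p"] p by simp
  show "arcsin (sqrt p) \<le> pi / 2" using arcsin_ubound [of "sqrt p"] p by simp
qed

lemma continuous_on_arcsin_sqrt: "continuous_on {0..1} (\<lambda>p. arcsin (sqrt p))"
  by (intro continuous_intros) (auto intro: order_trans [of "-1" 0])

lemma abs_arcsin_sqrt_diff_less_pi:
  "p \<in> {0..1} \<Longrightarrow> q \<in> {0..1} \<Longrightarrow> \<bar>arcsin (sqrt p) - arcsin (sqrt q)\<bar> < pi"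
  using arcsin_sqrt_nonneg [of p] arcsin_sqrt_nonneg [of q]
    arcsin_sqrt_le_pi_half [of p] arcsin_sqrt_le_pi_half [of q] pi_gt_zero
  by linarith

lemma arcsin_sqrt_factor_at_0:
  obtains v where "continuous_on {0..1} v"
    "\<And>p. p \<in> {0..1} \<Longrightarrow> v p \<noteq> 0 \<and> arcsin (sqrt p) = sqrt p * v p"
proof
  let ?\<theta> = "\<lambda>p. arcsin (sqrt p)"
  have nz: "sinc (?\<theta> p) \<noteq> 0" if "p \<in> {0..1}" for p
    using abs_arcsin_sqrt_diff_less_pi [OF that, of 0] by (intro sinc_nonzero) simp
  show "continuous_on {0..1} (\<lambda>p. 1 / sinc (?\<theta> p))"
    using nz by (intro continuous_intros continuous_on_arcsin_sqrt) auto
  show "1 / sinc (?\<theta> p) \<noteq> 0 \<and> ?\<theta> p = sqrt p * (1 / sinc (?\<theta> p))" if "p \<in> {0..1}" for p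
    using nz [OF that] sin_eq_mult_sinc [of "?\<theta> p"] sin_arcsin_sqrt [OF that]
    by (simp add: field_simps)
qed

lemma arcsin_sqrt_factor_at_1:
  obtains v where "continuous_on {0..1} v"
    "\<And>p. p \<in> {0..1} \<Longrightarrow> v p \<noteq> 0 \<and> arcsin (sqrt p) - pi / 2 = sqrt (1 - p) * v p"
proof
  let ?\<theta> = "\<lambda>p. arcsin (sqrt p) - pi / 2"
  have nz: "sinc (?\<theta> p) \<noteq> 0" if "p \<in> {0..1}" for p
    using abs_arcsin_sqrt_diff_less_pi [OF that, of 1] by (intro sinc_nonzero) simp
  show "continuous_on {0..1} (\<lambda>p. - 1 / sinc (?\<theta> p))"
    using nz by (intro continuous_intros continuous_on_arcsin_sqrt) auto
  show "- 1 / sinc (?\<theta> p) \<noteq> 0 \<and> ?\<theta> p = sqrt (1 - p) * (- 1 / sinc (?\<theta> p))"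
    if "p \<in> {0..1}" for p
  proof -
    have "sin (?\<theta> p) = - sqrt (1 - p)"
      using cos_arcsin_sqrt [OF that] by (simp add: sin_diff)
    then show ?thesis
      using nz [OF that] sin_eq_mult_sinc [of "?\<theta> p"] by (simp add: field_simps)
  qed
qed

lemma arcsin_sqrt_factor_interior:
  assumes z: "0 < z" "z < 1"
  obtains v where "continuous_on {0..1} v"
    "\<And>p. p \<in> {0..1} \<Longrightarrow> v p \<noteq> 0 \<and> arcsin (sqrt p) - arcsin (sqrt z) = (p - z) * v p"
proof
  let ?\<theta> = "\<lambda>p. arcsin (sqrt p)"
  let ?d = "\<lambda>p. sinc (?\<theta> p - ?\<theta> z) * sin (?\<theta> p + ?\<theta> z)"
  have z01: "z \<in> {0..1}" using z by simp
  have "-1 \<le> sqrt z" using z by (auto intro: order_trans [of "-1" 0])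
  then have "0 < ?\<theta> z" "?\<theta> z < pi / 2"
    using z arcsin_less_arcsin [of 0 "sqrt z"] arcsin_less_arcsin [of "sqrt z" 1] by auto
  then have nz: "?d p \<noteq> 0" if "p \<in> {0..1}" for p
  proof -
    have "sin (?\<theta> p + ?\<theta> z) > 0"
      using \<open>0 < ?\<theta> z\<close> \<open>?\<theta> z < pi / 2\<close> arcsin_sqrt_nonneg [OF that] arcsin_sqrt_le_pi_half [OF that]
      by (intro sin_gt_zero) auto
    then show ?thesis
      using sinc_nonzero [OF abs_arcsin_sqrt_diff_less_pi [OF that z01]] by simp
  qed
  show "continuous_on {0..1} (\<lambda>p. 1 / ?d p)"
    using nz by (intro continuous_intros continuous_on_arcsin_sqrt) auto
  show "1 / ?d p \<noteq> 0 \<and> ?\<theta> p - ?\<theta> z = (p - z) * (1 / ?d p)" if "p \<in> {0..1}" for p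
  proof -
    have "sin (?\<theta> p - ?\<theta> z) * sin (?\<theta> p + ?\<theta> z) = sin (?\<theta> p) ^ 2 - sin (?\<theta> z) ^ 2"
      by (rule sin_diff_mult_sin_add)
    also have "\<dots> = p - z"
      using that z01 by (simp add: sin_arcsin_sqrt)
    finally show ?thesis
      using nz [OF that] sin_eq_mult_sinc [of "?\<theta> p - ?\<theta> z"] by (simp add: field_simps)
  qed
qed

lemma arcsin_sqrt_diff_power_factor:
  assumes z: "z \<in> {0..1}" and "n > 0"
  obtains k v where "k > 0" "continuous_on {0..1} v"
    "\<And>p. p \<in> {0..1} \<Longrightarrow>
       v p \<noteq> 0 \<and> (arcsin (sqrt p) - arcsin (sqrt z)) ^ n = half_pow (p - z) k * v p"
proof -
  consider "z = 0" | "z = 1" | "0 < z \<and> z < 1" using z by fastforce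
  then show ?thesis
  proof cases
    case 1
    obtain v where "continuous_on {0..1} v"
      and v: "\<And>p. p \<in> {0..1} \<Longrightarrow> v p \<noteq> 0 \<and> arcsin (sqrt p) = sqrt p * v p"
      using arcsin_sqrt_factor_at_0 by blast
    show ?thesis
    proof
      show "continuous_on {0..1} (\<lambda>p. v p ^ n)" by (intro continuous_intros) fact
    qed (use \<open>n > 0\<close> 1 v in \<open>auto simp: half_pow_nonneg power_mult_distrib\<close>)
  next
    case 2
    obtain v where "continuous_on {0..1} v"
      and v: "\<And>p. p \<in> {0..1} \<Longrightarrow> v p \<noteq> 0 \<and> arcsin (sqrt p) - pi / 2 = sqrt (1 - p) * v p"
      using arcsin_sqrt_factor_at_1 by blast
    define \<sigma> :: real where "\<sigma> = (if even n then (-1) ^ (n div 2) else 1)"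
    have "\<sigma> * \<sigma> = 1" by (simp add: \<sigma>_def flip: power_add)
    show ?thesis
    proof
      show "continuous_on {0..1} (\<lambda>p. \<sigma> * v p ^ n)" by (intro continuous_intros) fact
    next
      fix p :: real assume "p \<in> {0..1}"
      have "half_pow (p - z) n = \<sigma> * sqrt (1 - p) ^ n"
        using 2 \<open>p \<in> {0..1}\<close> by (simp add: half_pow_nonpos \<sigma>_def)
      then show "\<sigma> * v p ^ n \<noteq> 0 \<and>
          (arcsin (sqrt p) - arcsin (sqrt z)) ^ n = half_pow (p - z) n * (\<sigma> * v p ^ n)"
        using 2 v [OF \<open>p \<in> {0..1}\<close>] \<open>\<sigma> * \<sigma> = 1\<close>
        by (auto simp: power_mult_distrib algebra_simps)
    qed (use \<open>n > 0\<close> in simp)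
  next
    case 3
    obtain v where "continuous_on {0..1} v"
      and v: "\<And>p. p \<in> {0..1} \<Longrightarrow> v p \<noteq> 0 \<and> arcsin (sqrt p) - arcsin (sqrt z) = (p - z) * v p"
      using 3 by (metis arcsin_sqrt_factor_interior)
    show ?thesis
    proof (rule that [of "2 * n"])
      show "continuous_on {0..1} (\<lambda>p. v p ^ n)" by (intro continuous_intros) fact
    qed (use \<open>n > 0\<close> v in \<open>auto simp: half_pow_double power_mult_distrib\<close>)
  qed
qed

lemma real_entire_zero_factor:
  fixes F :: "complex \<Rightarrow> complex" and h :: "real \<Rightarrow> real"
  assumes F: "F holomorphic_on UNIV" and F_real: "\<And>t. F (of_real t) = of_real (h t)"
    and "h a = 0" and "h b \<noteq> 0"
  obtains r n g where "r > 0" "n > 0" "continuous_on (ball a r) g" "g a \<noteq> 0"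
    "\<And>t. t \<in> ball a r \<Longrightarrow> h t = (t - a) ^ n * g t"
proof -
  have "F (of_real b) \<noteq> F (of_real a)"
    using F_real [of a] F_real [of b] \<open>h a = 0\<close> \<open>h b \<noteq> 0\<close> by simp
  then have "\<not> F constant_on UNIV"
    by (metis UNIV_I constant_on_def)
  then obtain G r n where "0 < n" "0 < r" and G: "G holomorphic_on ball (of_real a) r"
    and F_eq: "\<And>w. w \<in> ball (of_real a) r \<Longrightarrow> F w = (w - of_real a) ^ n * G w"
    and G_nz: "\<And>w. w \<in> ball (of_real a) r \<Longrightarrow> G w \<noteq> 0"
    using holomorphic_factor_zero_nonconstant [OF F open_UNIV connected_UNIV UNIV_I] F_real [of a]
      \<open>h a = 0\<close> by (metis of_real_0)
  have of_real_in_ball: "complex_of_real t \<in> ball (of_real a) r" if "t \<in> ball a r" for t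
    using that by (simp add: dist_norm flip: of_real_diff)
  have h_eq: "of_real (h t) = of_real ((t - a) ^ n) * G (of_real t)" if "t \<in> ball a r" for t
    using F_eq [OF of_real_in_ball [OF that]] F_real [of t] by simp
  have G_cont: "continuous_on (ball a r) (\<lambda>t. G (of_real t))"
    using holomorphic_on_imp_continuous_on [OF G] of_real_in_ball
    by (intro continuous_on_compose2 [OF _ continuous_on_of_real]) auto
  then have "isCont (\<lambda>t. G (of_real t)) a"
    using \<open>0 < r\<close> by (simp add: continuous_on_eq_continuous_at)
  then have "isCont (\<lambda>t. Im (G (of_real t))) a"
    by (rule isCont_Im)
  \<comment> \<open>Off \<open>a\<close>, \<open>G = F / (w - a)\<^sup>n\<close> is real on the real axis, so by continuity \<open>G a\<close> is real.\<close>
  moreover have "\<forall>\<^sub>F t in at a. Im (G (of_real t)) = 0"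
  proof -
    have "\<forall>\<^sub>F t in at a. t \<in> ball a r \<and> t \<noteq> a"
      using \<open>0 < r\<close> by (intro eventually_conj eventually_at_in_open' eventually_neq_at_within) auto
    then show ?thesis
    proof (rule eventually_mono)
      fix t assume t: "t \<in> ball a r \<and> t \<noteq> a"
      then have "Im (of_real (h t)) = Im (of_real ((t - a) ^ n) * G (of_real t))"
        using h_eq by simp
      then show "Im (G (of_real t)) = 0"
        using t by simp
    qed
  qed
  ultimately have "\<forall>\<^sub>F t in nhds a. Im (G (of_real t)) = 0"
    by (intro at_within_isCont_imp_nhds) auto
  then have "Im (G (of_real a)) = 0"
    by (rule eventually_nhds_x_imp_x)
  then have "Re (G (of_real a)) \<noteq> 0"
    using G_nz [of "of_real a"] \<open>0 < r\<close> by (auto simp: complex_eq_iff)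
  show ?thesis
  proof
    show "continuous_on (ball a r) (\<lambda>t. Re (G (of_real t)))"
      using G_cont by (intro continuous_intros)
    show "h t = (t - a) ^ n * Re (G (of_real t))" if "t \<in> ball a r" for t
    proof -
      have "Re (of_real (h t)) = Re (of_real ((t - a) ^ n) * G (of_real t))"
        using h_eq [OF that] by simp
      then show ?thesis by simp
    qed
  qed fact+
qed

definition poly3_sin_cos :: "(nat \<times> nat \<times> nat \<Rightarrow> real) \<Rightarrow> complex \<Rightarrow> complex" where
  "poly3_sin_cos c w =
     (\<Sum>e\<in>{e. c e \<noteq> 0}. of_real (c e) * (sin w ^ 2) ^ fst e * sin w ^ fst (snd e) * cos w ^ snd (snd e))"

lemma holomorphic_poly3_sin_cos: "poly3_sin_cos c holomorphic_on UNIV"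
  unfolding poly3_sin_cos_def by (intro holomorphic_intros)

lemma poly3_sin_cos_of_real:
  "poly3_sin_cos c (of_real t) = of_real (eval_poly3 c (sin t ^ 2) (sin t) (cos t))"
  by (simp add: poly3_sin_cos_def eval_poly3_def sin_of_real cos_of_real)

lemma eval_poly3_sin_cos_zero_factor:
  assumes "eval_poly3 c (sin a ^ 2) (sin a) (cos a) = 0"
    and "eval_poly3 c (sin b ^ 2) (sin b) (cos b) \<noteq> 0"
  obtains r n g where "r > 0" "n > 0" "continuous_on (ball a r) g" "g a \<noteq> 0"
    "\<And>t. t \<in> ball a r \<Longrightarrow> eval_poly3 c (sin t ^ 2) (sin t) (cos t) = (t - a) ^ n * g t"
  using real_entire_zero_factor [OF holomorphic_poly3_sin_cos poly3_sin_cos_of_real assms] by blast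

lemma eval_poly3_sqrt_eq_sin_cos:
  assumes "p \<in> {0..1}"
  shows "eval_poly3 c p (sqrt p) (sqrt (1 - p)) =
    eval_poly3 c (sin (arcsin (sqrt p)) ^ 2) (sin (arcsin (sqrt p))) (cos (arcsin (sqrt p)))"
  using assms by (simp add: sin_arcsin_sqrt cos_arcsin_sqrt)

lemma continuous_on_closed_nbhd_into_ball:
  fixes f :: "real \<Rightarrow> 'a::metric_space"
  assumes "continuous_on S f" "z \<in> S" "r > 0"
  obtains \<delta> where "\<delta> > 0" "f ` ({z - \<delta>..z + \<delta>} \<inter> S) \<subseteq> ball (f z) r"
proof -
  obtain d where "d > 0" and d: "\<And>p. p \<in> S \<Longrightarrow> dist p z < d \<Longrightarrow> dist (f p) (f z) < r"
    using assms unfolding continuous_on_iff by metis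
  show ?thesis
  proof
    show "d / 2 > 0" using \<open>d > 0\<close> by simp
    show "f ` ({z - d / 2..z + d / 2} \<inter> S) \<subseteq> ball (f z) r"
      using d \<open>d > 0\<close> by (force simp: dist_real_def dist_commute)
  qed
qed

theorem lemma3:
  fixes c :: "nat \<times> nat \<times> nat \<Rightarrow> real" and z :: real
  assumes "finite {e. c e \<noteq> 0}"
    and "\<exists>p\<in>{0..1}. eval_poly3 c p (sqrt p) (sqrt (1 - p)) \<noteq> 0"
    and "z \<in> {0..1}"
    and "eval_poly3 c z (sqrt z) (sqrt (1 - z)) = 0"
  shows "\<exists>\<delta>>0. \<exists>k::nat. k > 0 \<and> (\<exists>m :: real \<Rightarrow> real.
           continuous_on ({z - \<delta>..z + \<delta>} \<inter> {0..1}) m \<and> m z \<noteq> 0 \<and>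
           (\<forall>p\<in>{z - \<delta>..z + \<delta>} \<inter> {0..1}.
              eval_poly3 c p (sqrt p) (sqrt (1 - p)) = half_pow (p - z) k * m p))"
proof -
  define \<theta> where "\<theta> p = arcsin (sqrt p)" for p
  define h where "h t = eval_poly3 c (sin t ^ 2) (sin t) (cos t)" for t
  have T_eq: "eval_poly3 c p (sqrt p) (sqrt (1 - p)) = h (\<theta> p)" if "p \<in> {0..1}" for p
    using eval_poly3_sqrt_eq_sin_cos [OF that] by (simp add: h_def \<theta>_def)
  obtain p1 where "p1 \<in> {0..1}" "h (\<theta> p1) \<noteq> 0"
    using assms(2) T_eq by auto
  then obtain r n g where "r > 0" "n > 0"
    and g: "continuous_on (ball (\<theta> z) r) g" "g (\<theta> z) \<noteq> 0"
    and h_factor: "\<And>t. t \<in> ball (\<theta> z) r \<Longrightarrow> h t = (t - \<theta> z) ^ n * g t"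
    using eval_poly3_sin_cos_zero_factor [of c "\<theta> z" "\<theta> p1"] assms(3,4) T_eq
    unfolding h_def by metis
  obtain k v where "k > 0" and v: "continuous_on {0..1} v"
    and v_factor: "\<And>p. p \<in> {0..1} \<Longrightarrow> v p \<noteq> 0 \<and> (\<theta> p - \<theta> z) ^ n = half_pow (p - z) k * v p"
    using arcsin_sqrt_diff_power_factor [OF assms(3) \<open>n > 0\<close>] unfolding \<theta>_def by metis
  have \<theta>_cont: "continuous_on {0..1} \<theta>"
    using continuous_on_arcsin_sqrt by (simp add: \<theta>_def [abs_def])
  obtain \<delta> where "\<delta> > 0" and \<delta>: "\<theta> ` ({z - \<delta>..z + \<delta>} \<inter> {0..1}) \<subseteq> ball (\<theta> z) r"
    using continuous_on_closed_nbhd_into_ball [OF \<theta>_cont assms(3) \<open>r > 0\<close>] by blast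
  let ?P = "{z - \<delta>..z + \<delta>} \<inter> {0..1}"
  have "continuous_on ?P (\<lambda>p. v p * g (\<theta> p))"
    by (intro continuous_intros continuous_on_subset [OF v]
        continuous_on_compose2 [OF g(1) continuous_on_subset [OF \<theta>_cont] \<delta>]) auto
  moreover have "v z * g (\<theta> z) \<noteq> 0"
    using v_factor [OF assms(3)] g(2) by simp
  moreover have "eval_poly3 c p (sqrt p) (sqrt (1 - p)) = half_pow (p - z) k * (v p * g (\<theta> p))"
    if "p \<in> ?P" for p
  proof -
    have "\<theta> p \<in> ball (\<theta> z) r" using \<delta> that by blast
    then show ?thesis
      using that T_eq h_factor [of "\<theta> p"] v_factor [of p] by (simp add: mult.assoc)
  qed
  ultimately show ?thesis
    using \<open>\<delta> > 0\<close> \<open>k > 0\<close> by blast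
qed

end
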